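(* Let $n\ge t\ge1$ and write $n=at+b$ with $a\ge 1$ and $0\le b\le t-1$. Let $X_{n,t}$ be the set of integer sequences $i_1<\cdots<i_a$ such that (1) $(j-1)t+b+1\le i_j\le jt$ for $1\le j\le a$, and (2) $i_{j+1}-i_j\le t$ for $1\le j\le a-1$. Then $|X_{n,t}|=\binom{a+t-b-1}{a}$. *)

theory Defs
  imports Main
begin

definition X_set :: "nat \<Rightarrow> nat \<Rightarrow> int list set" where
  "X_set n t = {xs. let a = n div t; b = n mod t in
      length xs = a \<and>
      sorted_wrt (<) xs \<and>
      (\<forall>j\<in>{1..a}. int ((j - 1) * t + b + 1) \<le> xs ! (j - 1) \<and> xs ! (j - 1) \<le> int (j * t)) \<and>
      (\<forall>j\<in>{1..a - 1}. xs ! j - xs ! (j - 1) \<le> int t)}"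

end

theory Submission
  imports Defs
begin

text \<open>Index the list from \<open>k = 0\<close> and substitute \<open>z k = k(t + 1) + t - i k\<close>. Then
  \<open>z (k+1) - z k = t + 1 - (i (k+1) - i k)\<close>, so the gap bound \<open>i (k+1) - i k \<le> t\<close> becomes
  strict monotonicity of \<open>z\<close>, and the window \<open>kt + b < i k \<le> kt + t\<close> becomes
  \<open>k \<le> z k \<le> k + t - b - 1\<close>. For a strictly increasing integer sequence of length \<open>a\<close> these
  windows say exactly that all values lie in \<open>{0, \<dots>, a + t - b - 2}\<close>; they also force the gaps
  of \<open>z\<close> to be at most \<open>t - b \<le> t\<close>, which is monotonicity of \<open>i\<close>. So \<open>X\<^sub>n\<^sub>,\<^sub>t\<close> is in
  bijection with the \<open>a\<close>-subsets of an \<open>(a + t - b - 1)\<close>-element set.\<close>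

lemma card_strict_sorted_lists:
  fixes A :: "'a::linorder set"
  assumes "finite A"
  shows "card {xs. length xs = k \<and> sorted_wrt (<) xs \<and> set xs \<subseteq> A} = card A choose k"
proof -
  let ?L = "{xs. length xs = k \<and> sorted_wrt (<) xs \<and> set xs \<subseteq> A}"
  have "bij_betw set ?L {B. B \<subseteq> A \<and> card B = k}"
  proof (rule bij_betw_byWitness[where f' = sorted_list_of_set])
    show "\<forall>xs\<in>?L. sorted_list_of_set (set xs) = xs"
      by (simp add: sorted_list_of_set_sort_remdups strict_sorted_iff distinct_remdups_id
          sorted_sort_id)
    show "\<forall>B\<in>{B. B \<subseteq> A \<and> card B = k}. set (sorted_list_of_set B) = B"
      by (simp add: finite_subset[OF _ assms])
    show "set ` ?L \<subseteq> {B. B \<subseteq> A \<and> card B = k}"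
      using strict_sorted_iff distinct_card by fastforce
    show "sorted_list_of_set ` {B. B \<subseteq> A \<and> card B = k} \<subseteq> ?L"
      by (auto simp: rev_finite_subset[OF assms])
  qed
  then have "card ?L = card {B. B \<subseteq> A \<and> card B = k}"
    by (rule bij_betw_same_card)
  also have "\<dots> = card A choose k"
    by (rule n_subsets[OF assms])
  finally show ?thesis .
qed

lemma sorted_wrt_less_iff_nth_Suc:
  "sorted_wrt (<) (xs :: int list) \<longleftrightarrow> (\<forall>k. Suc k < length xs \<longrightarrow> xs ! k < xs ! Suc k)"
  by (rule sorted_wrt_iff_nth_Suc_transp) (rule transp_on_less)

lemma sorted_wrt_less_nth_diff:
  fixes xs :: "int list"
  assumes "sorted_wrt (<) xs" "i \<le> j" "j < length xs"
  shows "xs ! i + int (j - i) \<le> xs ! j"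
  using assms(2,3)
proof (induction j)
  case (Suc j)
  show ?case
  proof (cases "i = Suc j")
    case False
    then have "xs ! i + int (j - i) \<le> xs ! j" using Suc by simp
    moreover have "xs ! j < xs ! Suc j" using assms(1) Suc.prems sorted_wrt_nth_less by fastforce
    ultimately show ?thesis using False Suc.prems by (simp add: Suc_diff_le)
  qed simp
qed simp

lemma sorted_wrt_less_nth_bounds:
  fixes xs :: "int list"
  assumes "sorted_wrt (<) xs" "set xs \<subseteq> {0..<int K}" "k < length xs"
  shows "int k \<le> xs ! k" "xs ! k + int (length xs) \<le> int K + int k"
proof -
  have "xs ! 0 \<in> set xs" "xs ! (length xs - 1) \<in> set xs"
    using assms(3) by (auto intro!: nth_mem)
  then have "0 \<le> xs ! 0" "xs ! (length xs - 1) < int K"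
    using assms(2) by auto
  moreover have "xs ! 0 + int k \<le> xs ! k"
    using sorted_wrt_less_nth_diff[OF assms(1), of 0 k] assms(3) by simp
  moreover have "xs ! k + int (length xs - 1 - k) \<le> xs ! (length xs - 1)"
    using sorted_wrt_less_nth_diff[OF assms(1), of k "length xs - 1"] assms(3) by simp
  moreover have "int (length xs - 1 - k) = int (length xs) - 1 - int k"
    using assms(3) by linarith
  ultimately show "int k \<le> xs ! k" "xs ! k + int (length xs) \<le> int K + int k"
    by linarith+
qed

lemma mem_X_set_iff:
  assumes "b < t"
  shows "xs \<in> X_set (a * t + b) t \<longleftrightarrow>
    length xs = a \<and> sorted_wrt (<) xs \<and>
    (\<forall>k<a. int (k * t + b) < xs ! k \<and> xs ! k \<le> int (k * t + t)) \<and>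
    (\<forall>k. Suc k < a \<longrightarrow> xs ! Suc k \<le> xs ! k + int t)"
proof -
  have shift: "(\<forall>j\<in>{1..m}. P j) \<longleftrightarrow> (\<forall>k<m. P (Suc k))" for m and P :: "nat \<Rightarrow> bool"
    unfolding image_Suc_lessThan[symmetric] by auto
  have "(a * t + b) div t = a" "(a * t + b) mod t = b"
    using assms by auto
  then show ?thesis
    unfolding X_set_def Let_def mem_Collect_eq shift
    by (simp add: shift[where m = "a - 1"] less_diff_conv algebra_simps)
      (simp only: add1_zle_eq[unfolded add.commute[of _ 1]])
qed

definition reflect :: "nat \<Rightarrow> int list \<Rightarrow> int list" where
  "reflect t xs = map (\<lambda>k. int k * (int t + 1) + int t - xs ! k) [0..<length xs]"

lemma length_reflect [simp]: "length (reflect t xs) = length xs"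
  by (simp add: reflect_def)

lemma nth_reflect [simp]: "k < length xs \<Longrightarrow> reflect t xs ! k = int k * (int t + 1) + int t - xs ! k"
  by (simp add: reflect_def)

lemma reflect_reflect [simp]: "reflect t (reflect t xs) = xs"
  by (rule nth_equalityI) auto

lemma reflect_gap:
  "Suc k < length xs \<Longrightarrow> reflect t xs ! Suc k - reflect t xs ! k = int t + 1 - (xs ! Suc k - xs ! k)"
  by (simp add: algebra_simps)

lemma reflect_of_X_set:
  assumes "b < t" "xs \<in> X_set (a * t + b) t"
  shows "length (reflect t xs) = a" "sorted_wrt (<) (reflect t xs)"
    "set (reflect t xs) \<subseteq> {0..<int (a + t - b - 1)}"
proof -
  note xs = assms(2)[unfolded mem_X_set_iff[OF assms(1)]]
  then show "length (reflect t xs) = a" by simp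
  show "sorted_wrt (<) (reflect t xs)"
    unfolding sorted_wrt_less_iff_nth_Suc using xs reflect_gap[of _ xs t] by force
  show "set (reflect t xs) \<subseteq> {0..<int (a + t - b - 1)}"
  proof
    fix z assume "z \<in> set (reflect t xs)"
    then obtain k where k: "k < a" "z = int k * (int t + 1) + int t - xs ! k"
      using xs by (auto simp: in_set_conv_nth)
    have "int (k * t + b) < xs ! k" "xs ! k \<le> int (k * t + t)" using xs k(1) by auto
    moreover have "int (a + t - b - 1) = int a + int t - int b - 1"
      using assms(1) by auto
    ultimately show "z \<in> {0..<int (a + t - b - 1)}"
      using k by (simp add: distrib_left)
  qed
qed

lemma reflect_in_X_set:
  assumes "b < t" "length zs = a" "sorted_wrt (<) zs" "set zs \<subseteq> {0..<int (a + t - b - 1)}"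
  shows "reflect t zs \<in> X_set (a * t + b) t"
proof -
  have window: "int k \<le> zs ! k" "zs ! k + int b < int k + int t" if "k < a" for k
    using sorted_wrt_less_nth_bounds[OF assms(3,4), of k] that assms(1,2) by auto
  have "reflect t zs ! k < reflect t zs ! Suc k" if "Suc k < a" for k
    using window[of k] window[of "Suc k"] that assms(2) reflect_gap[of k zs t] by simp
  moreover have "reflect t zs ! Suc k \<le> reflect t zs ! k + int t" if "Suc k < a" for k
    using that assms(2,3) reflect_gap[of k zs t] sorted_wrt_less_iff_nth_Suc by fastforce
  moreover have "int (k * t + b) < reflect t zs ! k \<and> reflect t zs ! k \<le> int (k * t + t)"
    if "k < a" for k
    using window[OF that] that assms(2) by (simp add: algebra_simps)
  ultimately show ?thesis
    unfolding mem_X_set_iff[OF assms(1)] sorted_wrt_less_iff_nth_Suc length_reflect assms(2)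
    by blast
qed

lemma bij_betw_reflect_X_set:
  assumes "b < t"
  shows "bij_betw (reflect t) (X_set (a * t + b) t)
    {zs. length zs = a \<and> sorted_wrt (<) zs \<and> set zs \<subseteq> {0..<int (a + t - b - 1)}}"
proof (rule bij_betw_byWitness[where f' = "reflect t"])
  show "reflect t ` X_set (a * t + b) t \<subseteq>
      {zs. length zs = a \<and> sorted_wrt (<) zs \<and> set zs \<subseteq> {0..<int (a + t - b - 1)}}"
    using reflect_of_X_set[OF assms] by blast
  show "reflect t ` {zs. length zs = a \<and> sorted_wrt (<) zs \<and> set zs \<subseteq> {0..<int (a + t - b - 1)}}
      \<subseteq> X_set (a * t + b) t"
    using reflect_in_X_set[OF assms] by blast
qed simp_all

theorem corollary3p5:
  fixes n t a b :: nat
  assumes "1 \<le> t" and "t \<le> n"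
    and "n = a * t + b" and "1 \<le> a" and "b \<le> t - 1"
  shows "card (X_set n t) = (a + t - b - 1) choose a"
proof -
  have "b < t" using assms(1,5) by linarith
  then have "card (X_set n t) =
      card {zs. length zs = a \<and> sorted_wrt (<) zs \<and> set zs \<subseteq> {0..<int (a + t - b - 1)}}"
    unfolding assms(3) by (rule bij_betw_same_card[OF bij_betw_reflect_X_set])
  also have "\<dots> = (a + t - b - 1) choose a"
    by (subst card_strict_sorted_lists) simp_all
  finally show ?thesis .
qed

end
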